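(* For every integer $k \geq 8$ that is divisible by four, \[ f\left(n,k,\binom{k}{2} - k/2 + 1\right) = \Omega\left(n^{2 - 8/k}\right). \]
   Context: For positive integers $n,k,\ell$, $f(n,k,\ell)$ denotes the minimum number of colors $|C|$ in a coloring $\chi:E\to C$ of the edges of the complete graph $K_n=(V,E)$ such that every set of $k$ vertices of $V$ spans (in the induced complete subgraph $K_k$) edges of at least $\ell$ distinct colors. The parameter $k$ is fixed and the asymptotic notation refers to $n\to\infty$ (implied constants may depend on $k$). *)

theory Defs
  imports "HOL-Analysis.Analysis" "HOL-Library.Landau_Symbols"
begin

definition edges_of :: "nat set \<Rightarrow> nat set set" where
  "edges_of S = {e. e \<subseteq> S \<and> card e = 2}"

definition good_colouring :: "nat \<Rightarrow> nat \<Rightarrow> nat \<Rightarrow> (nat set \<Rightarrow> nat) \<Rightarrow> bool" where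
  "good_colouring n k l col \<longleftrightarrow>
     (\<forall>S. S \<subseteq> {..<n} \<and> card S = k \<longrightarrow> card (col ` edges_of S) \<ge> l)"

definition f :: "nat \<Rightarrow> nat \<Rightarrow> nat \<Rightarrow> nat" where
  "f n k l = (LEAST c. \<exists>col. good_colouring n k l col \<and> card (col ` edges_of {..<n}) = c)"

end

theory Submission
  imports Defs "HOL-Library.Nat_Bijection"
begin

text \<open>Fix an optimal colouring. Its defining property says that any \<open>k\<close> vertices span fewer
  than \<open>k/2\<close> colour repetitions (edges minus colours). Hence fewer than \<open>k\<close> vertices are
  centres of monochromatic stars with \<open>k\<close> leaves, as \<open>k/4\<close> such stars would give \<open>k/2\<close>
  repetitions; at every other (light) vertex all colour classes have fewer than \<open>k\<close> edges.

  By Cauchy--Schwarz, the number of colours is at least \<open>n\<^sup>4\<close> over the number of pairs of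
  equally coloured pairs of light vertices, and the latter is dominated by quadruples
  \<open>(a, c, b, d)\<close> of distinct vertices with \<open>\<chi>(ac) = \<chi>(bd)\<close>. For a suitable set \<open>X\<close>, a sixteenth of
  these quadruples have \<open>a, c \<in> X\<close> and \<open>b, d \<notin> X\<close>, and those are the edges \<open>(a, b) \<sim> (c, d)\<close>
  of a product graph on \<open>X \<times> X\<^sup>c\<close>. If its average degree exceeded about \<open>m = n\<^bsup>8/k\<^esup>\<close>, a
  subgraph of large minimum degree would contain more than \<open>n\<^sup>2\<close> paths of length \<open>k/4\<close> ending
  at a fixed vertex, so two of them would start at the same vertex. Projecting both paths to
  the two coordinates gives two graphs with the same colours on at most \<open>k\<close> vertices in
  total, one of which has at least half as many edges as that total; growing both by edges
  at the common end gives \<open>k\<close> vertices with \<open>k/2\<close> repetitions, a contradiction. Hence there are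
  \<open>O(n\<^bsup>2 + 8/k\<^esup>)\<close> such quadruples and \<open>\<Omega>(n\<^bsup>2 - 8/k\<^esup>)\<close> colours.\<close>

section \<open>Edges and paths\<close>

lemma doubleton_in_edges_of: "a \<in> S \<Longrightarrow> b \<in> S \<Longrightarrow> a \<noteq> b \<Longrightarrow> {a, b} \<in> edges_of S"
  by (auto simp: edges_of_def)

lemma edges_of_mono: "S \<subseteq> T \<Longrightarrow> edges_of S \<subseteq> edges_of T"
  by (auto simp: edges_of_def)

lemma finite_edges_of: "finite S \<Longrightarrow> finite (edges_of S)"
  unfolding edges_of_def by (rule finite_subset[of _ "Pow S"]) auto

lemma card_edges_of: "finite S \<Longrightarrow> card (edges_of S) = card S choose 2"
  unfolding edges_of_def by (rule n_subsets)

lemma finite_if_in_edges_of: "e \<in> edges_of S \<Longrightarrow> finite e"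
  by (auto simp: edges_of_def intro: card_ge_0_finite)

lemma edges_of_disjoint: "S \<inter> T = {} \<Longrightarrow> edges_of S \<inter> edges_of T = {}"
  by (auto simp: edges_of_def card_2_iff)

definition path_edges :: "'a list \<Rightarrow> 'a set set" where
  "path_edges xs = (\<lambda>i. {xs ! i, xs ! Suc i}) ` {i. Suc i < length xs}"

lemma finite_path_edges: "finite (path_edges xs)"
  unfolding path_edges_def by (rule finite_imageI, rule finite_subset[of _ "{..<length xs}"]) auto

lemma path_edges_subset_set: "e \<in> path_edges xs \<Longrightarrow> e \<subseteq> set xs"
  unfolding path_edges_def by auto

lemma path_edges_subset_edges_of: "distinct xs \<Longrightarrow> path_edges xs \<subseteq> edges_of (set xs)"
  unfolding path_edges_def edges_of_def by (auto simp: nth_eq_iff_index_eq)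

lemma path_edges_map: "path_edges (map h xs) = (\<lambda>i. {h (xs ! i), h (xs ! Suc i)}) ` {i. Suc i < length xs}"
  unfolding path_edges_def by simp

lemma distinct_path_edge_eq_iff:
  assumes "distinct ys" "Suc i < length ys" "Suc j < length ys"
  shows "{ys ! i, ys ! Suc i} = {ys ! j, ys ! Suc j} \<longleftrightarrow> i = j"
proof
  assume "{ys ! i, ys ! Suc i} = {ys ! j, ys ! Suc j}"
  then have "(ys ! i = ys ! j \<and> ys ! Suc i = ys ! Suc j) \<or> (ys ! i = ys ! Suc j \<and> ys ! Suc i = ys ! j)"
    by (auto simp: doubleton_eq_iff)
  then show "i = j" using assms by (auto simp: nth_eq_iff_index_eq)
qed simp

lemma card_path_edges: "distinct xs \<Longrightarrow> card (path_edges xs) = length xs - 1"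
proof -
  assume "distinct xs"
  then have "card (path_edges xs) = card {i. Suc i < length xs}"
    unfolding path_edges_def by (intro card_image) (auto simp: inj_on_def distinct_path_edge_eq_iff)
  also have "{i. Suc i < length xs} = {..<length xs - 1}" by auto
  finally show ?thesis by simp
qed

lemma path_edges_subset_imp_eq:
  assumes dx: "distinct xs" and dy: "distinct ys" and len: "length xs = length ys"
    and head: "xs ! 0 = ys ! 0" and sub: "path_edges ys \<subseteq> path_edges xs"
  shows "xs = ys"
proof (rule nth_equalityI[OF len])
  fix i assume "i < length xs"
  then show "xs ! i = ys ! i"
  proof (induction i rule: less_induct)
    case (less i)
    show ?case
    proof (cases i)
      case 0
      with head show ?thesis by simp
    next
      case (Suc j)
      have IH: "xs ! j = ys ! j" using less Suc by simp
      have "{ys ! j, ys ! Suc j} \<in> path_edges xs"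
        using sub less.prems Suc len unfolding path_edges_def by auto
      then obtain q where q: "Suc q < length xs" "{ys ! j, ys ! Suc j} = {xs ! q, xs ! Suc q}"
        unfolding path_edges_def by blast
      then consider "ys ! j = xs ! q" "ys ! Suc j = xs ! Suc q" | "ys ! j = xs ! Suc q" "ys ! Suc j = xs ! q"
        by (auto simp: doubleton_eq_iff)
      then show ?thesis
      proof cases
        case 1
        with IH dx q less.prems Suc have "j = q" by (simp add: nth_eq_iff_index_eq)
        with 1 Suc show ?thesis by simp
      next
        case 2
        \<comment> \<open>then \<open>ys ! Suc j = ys ! (j - 1)\<close>, impossible for a path\<close>
        with IH dx q less.prems Suc have jq: "j = Suc q" by (simp add: nth_eq_iff_index_eq)
        with less Suc have "xs ! q = ys ! q" by simp
        with 2 dy q len less.prems Suc have "Suc j = q" by (simp add: nth_eq_iff_index_eq)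
        with jq show ?thesis by simp
      qed
    qed
  qed
qed

lemma set_subset_if_path_edges_closed:
  assumes ne: "ys \<noteq> []" and last: "last ys \<in> set xs"
    and closed: "\<And>i. Suc i < length ys \<Longrightarrow> ys ! Suc i \<in> set xs \<Longrightarrow> {ys ! i, ys ! Suc i} \<in> path_edges xs"
  shows "set ys \<subseteq> set xs"
proof
  fix y assume "y \<in> set ys"
  then obtain i where i: "i < length ys" "y = ys ! i" by (auto simp: in_set_conv_nth)
  have "i \<le> length ys - 1" using i by simp
  then have "ys ! i \<in> set xs"
  proof (induction rule: inc_induct)
    case base
    from last ne show ?case by (simp add: last_conv_nth)
  next
    case (step j)
    then have "{ys ! j, ys ! Suc j} \<in> path_edges xs" by (intro closed) auto
    then show ?case using path_edges_subset_set by blast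
  qed
  with i show "y \<in> set xs" by simp
qed

lemma exists_new_path_edge_into_set:
  assumes dx: "distinct xs" and dy: "distinct ys" and len: "length xs = length ys"
    and ne: "xs \<noteq> ys" and head: "xs ! 0 = ys ! 0" and last: "last xs = last ys"
  shows "\<exists>i. Suc i < length ys \<and> ys ! Suc i \<in> set xs \<and> {ys ! i, ys ! Suc i} \<notin> path_edges xs"
proof (rule ccontr)
  assume closed: "\<not> ?thesis"
  have "xs \<noteq> []" using ne len by auto
  then have "set ys \<subseteq> set xs"
    using closed len last last_in_set[of xs] by (intro set_subset_if_path_edges_closed) auto
  have "path_edges ys \<subseteq> path_edges xs"
  proof
    fix e assume "e \<in> path_edges ys"
    then obtain i where i: "Suc i < length ys" "e = {ys ! i, ys ! Suc i}"
      unfolding path_edges_def by blast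
    with \<open>set ys \<subseteq> set xs\<close> have "ys ! Suc i \<in> set xs" by auto
    with i closed show "e \<in> path_edges xs" by blast
  qed
  with path_edges_subset_imp_eq[OF dx dy len head] ne show False by blast
qed

lemma card_set_diff_eq_card_steps_out:
  assumes dy: "distinct ys" and head: "ys \<noteq> []" "ys ! 0 \<in> set xs"
  shows "card (set ys - set xs) = card {i. Suc i < length ys \<and> ys ! Suc i \<notin> set xs}"
proof -
  let ?I = "{i. Suc i < length ys \<and> ys ! Suc i \<notin> set xs}"
  have "set ys - set xs = (\<lambda>i. ys ! Suc i) ` ?I"
  proof
    show "set ys - set xs \<subseteq> (\<lambda>i. ys ! Suc i) ` ?I"
    proof
      fix v assume v: "v \<in> set ys - set xs"
      then obtain j where j: "j < length ys" "ys ! j = v" by (auto simp: in_set_conv_nth)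
      with v head have "j \<noteq> 0" by (metis DiffD2)
      then obtain i where "j = Suc i" using not0_implies_Suc by blast
      with j v show "v \<in> (\<lambda>i. ys ! Suc i) ` ?I" by auto
    qed
  qed auto
  moreover have "inj_on (\<lambda>i. ys ! Suc i) ?I"
    using dy by (auto simp: inj_on_def nth_eq_iff_index_eq)
  ultimately show ?thesis by (simp add: card_image)
qed

text \<open>The union of two distinct paths with common end vertices contains a cycle: besides
  the edges of \<open>xs\<close>, one edge of \<open>ys\<close> enters each vertex outside \<open>xs\<close>, and one more edge
  of \<open>ys\<close> returns into \<open>xs\<close>.\<close>

lemma card_Un_set_le_card_Un_path_edges:
  assumes dx: "distinct xs" and dy: "distinct ys" and len: "length xs = length ys"
    and ne: "xs \<noteq> ys" and head: "xs ! 0 = ys ! 0" and last: "last xs = last ys"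
  shows "card (set xs \<union> set ys) \<le> card (path_edges xs \<union> path_edges ys)"
proof -
  have nex: "xs \<noteq> []" using ne len by auto
  from exists_new_path_edge_into_set[OF assms] obtain i0 where
    i0: "Suc i0 < length ys" "ys ! Suc i0 \<in> set xs" "{ys ! i0, ys ! Suc i0} \<notin> path_edges xs"
    by blast
  define I where "I = {i. Suc i < length ys \<and> ys ! Suc i \<notin> set xs}"
  define E where "E = (\<lambda>i. {ys ! i, ys ! Suc i}) ` I"
  define e where "e = {ys ! i0, ys ! Suc i0}"
  have fI: "finite I" unfolding I_def by (rule finite_subset[of _ "{..<length ys}"]) auto
  have cE: "card E = card I" unfolding E_def
    using dy by (intro card_image) (auto simp: inj_on_def I_def distinct_path_edge_eq_iff)
  have "card (set ys - set xs) = card I"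
  proof -
    have "ys ! 0 \<in> set xs" using head nex by (metis nth_mem length_greater_0_conv)
    then show ?thesis unfolding I_def using dy nex len by (intro card_set_diff_eq_card_steps_out) auto
  qed
  have disj: "path_edges xs \<inter> E = {}" unfolding E_def I_def using path_edges_subset_set by blast
  have "e \<notin> E"
    using dy i0 unfolding E_def e_def I_def by (auto simp: distinct_path_edge_eq_iff)
  have "insert e (path_edges xs \<union> E) \<subseteq> path_edges xs \<union> path_edges ys"
    unfolding E_def e_def path_edges_def I_def using i0 by auto
  have "card (set xs \<union> set ys) = card (set xs) + card (set ys - set xs)"
    by (metis Un_Diff_cancel card_Un_disjoint Diff_disjoint finite_set finite_Diff inf_commute)
  also have "\<dots> = length xs + card I"
    using \<open>card (set ys - set xs) = card I\<close> dx by (simp add: distinct_card)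
  also have "\<dots> = card (insert e (path_edges xs \<union> E))"
    using card_path_edges[OF dx] cE disj \<open>e \<notin> E\<close> i0 fI nex finite_path_edges[of xs]
    unfolding E_def e_def by (simp add: card_Un_disjoint)
  also have "\<dots> \<le> card (path_edges xs \<union> path_edges ys)"
    by (rule card_mono[OF _ \<open>insert e _ \<subseteq> _\<close>]) (simp add: finite_path_edges)
  finally show ?thesis .
qed

lemma card_Un_set_paths_le:
  assumes "distinct xs" "distinct ys" "length xs = Suc g" "length ys = Suc g" "1 \<le> g"
    and "xs ! 0 = ys ! 0" "last xs = last ys"
  shows "card (set xs \<union> set ys) \<le> 2 * g"
proof -
  have "xs ! 0 \<noteq> xs ! g" using assms(1,3,5) by (simp add: nth_eq_iff_index_eq)
  moreover have "{xs ! 0, xs ! g} \<subseteq> set xs \<inter> set ys"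
  proof -
    have "xs \<noteq> []" "ys \<noteq> []" using assms(3,4) by auto
    then have "last xs = xs ! g" "last ys = ys ! g" using assms(3,4) by (simp_all add: last_conv_nth)
    then show ?thesis
      using assms(3,4,6,7) nth_mem[of 0 xs] nth_mem[of g xs] nth_mem[of 0 ys] nth_mem[of g ys] by auto
  qed
  ultimately have "2 \<le> card (set xs \<inter> set ys)"
    by (metis card_2_iff card_mono finite_Int finite_set)
  moreover have "card (set xs \<union> set ys) + card (set xs \<inter> set ys) = card (set xs) + card (set ys)"
    using card_Un_Int[of "set xs" "set ys"] by simp
  moreover have "card (set xs) = Suc g" "card (set ys) = Suc g" using assms by (auto simp: distinct_card)
  ultimately show ?thesis by linarith
qed


section \<open>Counting lemmas\<close>

lemma card_squared_le_card_same_image: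
  assumes A: "finite A"
  shows "card A ^ 2 \<le> card {(x, y) \<in> A \<times> A. h x = h y} * card (h ` A)"
proof -
  define fibre where "fibre c = {x \<in> A. h x = c}" for c
  have "{(x, y) \<in> A \<times> A. h x = h y} = Sigma A (\<lambda>x. fibre (h x))"
    unfolding fibre_def by auto
  then have "card {(x, y) \<in> A \<times> A. h x = h y} = (\<Sum>x\<in>A. card (fibre (h x)))"
    using A by (simp add: fibre_def)
  also have "\<dots> = (\<Sum>c\<in>h ` A. \<Sum>x\<in>fibre c. card (fibre (h x)))"
    unfolding fibre_def by (rule sum.image_gen[OF A])
  also have "\<dots> = (\<Sum>c\<in>h ` A. card (fibre c) ^ 2)"
    by (intro sum.cong) (auto simp: fibre_def power2_eq_square)
  finally have pairs: "card {(x, y) \<in> A \<times> A. h x = h y} = (\<Sum>c\<in>h ` A. card (fibre c) ^ 2)" .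
  have "card A = (\<Sum>x\<in>A. 1)" by simp
  also have "\<dots> = (\<Sum>c\<in>h ` A. card (fibre c))"
    unfolding fibre_def by (subst sum.image_gen[OF A]) simp
  finally have total: "card A = (\<Sum>c\<in>h ` A. card (fibre c))" .
  have "(\<Sum>c\<in>h ` A. real (card (fibre c)))\<^sup>2 \<le> (\<Sum>c\<in>h ` A. (real (card (fibre c)))\<^sup>2) * card (h ` A)"
    by (rule sum_squared_le_sum_of_squares)
  then have "real (card A ^ 2) \<le> real (card {(x, y) \<in> A \<times> A. h x = h y} * card (h ` A))"
    unfolding pairs total by simp
  then show ?thesis by (simp only: of_nat_le_iff)
qed

lemma sum_degrees_remove:
  fixes R :: "'a \<Rightarrow> 'a \<Rightarrow> bool"
  assumes W: "finite W" "p \<in> W" and sym: "\<And>x y. R x y \<Longrightarrow> R y x" and irrefl: "\<And>x. \<not> R x x"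
  shows "(\<Sum>q\<in>W. card {x\<in>W. R q x}) = (\<Sum>q\<in>W - {p}. card {x\<in>W - {p}. R q x}) + 2 * card {x\<in>W. R p x}"
proof -
  have deg: "card {x\<in>W. R q x} = card {x\<in>W - {p}. R q x} + (if R q p then 1 else 0)" if "q \<in> W - {p}" for q
  proof (cases "R q p")
    case True
    then have "{x\<in>W. R q x} = insert p {x\<in>W - {p}. R q x}" using W by auto
    with True W show ?thesis by simp
  next
    case False
    then have "{x\<in>W. R q x} = {x\<in>W - {p}. R q x}" by auto
    with False show ?thesis by simp
  qed
  have "(\<Sum>q\<in>W - {p}. if R q p then 1 else 0) = card ((W - {p}) \<inter> {q. R q p})"
    using W by (simp add: sum.If_cases)
  also have "(W - {p}) \<inter> {q. R q p} = {x\<in>W. R p x}"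
    using sym irrefl by blast
  finally have incoming: "(\<Sum>q\<in>W - {p}. if R q p then 1 else 0) = card {x\<in>W. R p x}" .
  have "(\<Sum>q\<in>W. card {x\<in>W. R q x}) = card {x\<in>W. R p x} + (\<Sum>q\<in>W - {p}. card {x\<in>W. R q x})"
    using W by (simp add: sum.remove)
  also have "(\<Sum>q\<in>W - {p}. card {x\<in>W. R q x})
      = (\<Sum>q\<in>W - {p}. card {x\<in>W - {p}. R q x}) + (\<Sum>q\<in>W - {p}. if R q p then 1 else 0)"
    using deg by (simp add: sum.distrib)
  finally show ?thesis using incoming by simp
qed


text \<open>Deleting a vertex of degree at most \<open>\<delta>\<close> keeps the average degree above \<open>2 \<delta>\<close>.\<close>

lemma exists_subgraph_min_degree:
  fixes R :: "'a \<Rightarrow> 'a \<Rightarrow> bool" and \<delta> :: nat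
  assumes "finite W" and sym: "\<And>x y. R x y \<Longrightarrow> R y x" and irrefl: "\<And>x. \<not> R x x"
    and "2 * \<delta> * card W < (\<Sum>p\<in>W. card {q\<in>W. R p q})"
  shows "\<exists>W'\<subseteq>W. W' \<noteq> {} \<and> (\<forall>p\<in>W'. \<delta> < card {q\<in>W'. R p q})"
  using assms(1,4)
proof (induction W rule: finite_psubset_induct)
  case (psubset W)
  show ?case
  proof (cases "\<forall>p\<in>W. \<delta> < card {q\<in>W. R p q}")
    case True
    moreover have "W \<noteq> {}" using psubset.prems by auto
    ultimately show ?thesis by blast
  next
    case False
    then obtain p where p: "p \<in> W" "card {q\<in>W. R p q} \<le> \<delta>" by (auto simp: not_less)
    have "card W = card (W - {p}) + 1"
      using p psubset.hyps by (metis card_Suc_Diff1 Suc_eq_plus1)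
    moreover have "(\<Sum>q\<in>W. card {x\<in>W. R q x})
        = (\<Sum>q\<in>W - {p}. card {x\<in>W - {p}. R q x}) + 2 * card {x\<in>W. R p x}"
      using sym irrefl by (rule sum_degrees_remove[OF psubset.hyps p(1)])
    ultimately have fewer: "2 * \<delta> * card (W - {p}) < (\<Sum>q\<in>W - {p}. card {x\<in>W - {p}. R q x})"
      using psubset.prems p(2) by (simp add: algebra_simps)
    have "W - {p} \<subset> W" using p by auto
    from psubset.IH[OF this fewer] obtain W' where
      "W' \<subseteq> W - {p}" "W' \<noteq> {}" "\<forall>q\<in>W'. \<delta> < card {x\<in>W'. R q x}"
      by blast
    then show ?thesis by blast
  qed
qed

definition separates :: "'a set \<Rightarrow> 'a \<times> 'a \<times> 'a \<times> 'a \<Rightarrow> bool" where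
  "separates X = (\<lambda>(a, c, b, d). a \<in> X \<and> c \<in> X \<and> b \<notin> X \<and> d \<notin> X)"

lemma card_separating_subsets:
  assumes V: "finite V" and q: "a \<in> V" "c \<in> V" "b \<in> V" "d \<in> V" "distinct [a, c, b, d]"
  shows "card {X \<in> Pow V. separates X (a, c, b, d)} = 2 ^ (card V - 4)"
proof -
  have "bij_betw (\<lambda>Y. Y \<union> {a, c}) (Pow (V - {a, c, b, d})) {X \<in> Pow V. separates X (a, c, b, d)}"
    by (rule bij_betw_byWitness[where f' = "\<lambda>X. X - {a, c}"]) (use q in \<open>auto simp: separates_def\<close>)
  then have "card {X \<in> Pow V. separates X (a, c, b, d)} = card (Pow (V - {a, c, b, d}))"
    by (simp add: bij_betw_same_card)
  also have "\<dots> = 2 ^ card (V - {a, c, b, d})" using V by (simp add: card_Pow)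
  also have "card (V - {a, c, b, d}) = card V - 4"
    using q V by (subst card_Diff_subset) auto
  finally show ?thesis .
qed

text \<open>A uniformly random subset \<open>X\<close> separates a fixed quadruple with probability \<open>1/16\<close>.\<close>

lemma exists_subset_separating_many:
  assumes V: "finite V"
    and Q: "\<And>a c b d. (a, c, b, d) \<in> Q \<Longrightarrow> a \<in> V \<and> c \<in> V \<and> b \<in> V \<and> d \<in> V \<and> distinct [a, c, b, d]"
  shows "\<exists>X\<subseteq>V. card Q \<le> 16 * card {q \<in> Q. separates X q}"
proof (cases "Q = {}")
  case False
  then obtain a c b d where "(a, c, b, d) \<in> Q" by (metis all_not_in_conv prod_cases4)
  then have "card {a, c, b, d} = 4" "{a, c, b, d} \<subseteq> V" using Q[of a c b d] by auto
  then have "4 \<le> card V" using card_mono[OF V, of "{a, c, b, d}"] by simp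
  define t where "t = card V - 4"
  have t: "card V = t + 4" using \<open>4 \<le> card V\<close> unfolding t_def by simp
  have QV: "Q \<subseteq> V \<times> V \<times> V \<times> V"
  proof
    fix q assume "q \<in> Q"
    then show "q \<in> V \<times> V \<times> V \<times> V" using Q by (cases q) simp
  qed
  have fQ: "finite Q" using finite_subset[OF QV] V by blast
  have "(\<Sum>X\<in>Pow V. card {q \<in> Q. separates X q}) = (\<Sum>X\<in>Pow V. \<Sum>q\<in>Q. if separates X q then 1 else 0)"
    using fQ by (simp add: sum.If_cases Int_def)
  also have "\<dots> = (\<Sum>q\<in>Q. card {X \<in> Pow V. separates X q})"
    using V by (subst sum.swap) (simp add: sum.If_cases Int_def)
  also have "\<dots> = (\<Sum>q\<in>Q. 2 ^ t)"
    using Q card_separating_subsets[OF V] t by (intro sum.cong) auto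
  finally have sum: "(\<Sum>X\<in>Pow V. card {q \<in> Q. separates X q}) = card Q * 2 ^ t" by simp
  show ?thesis
  proof (rule ccontr)
    assume "\<not> ?thesis"
    then have "(\<Sum>X\<in>Pow V. 16 * card {q \<in> Q. separates X q}) < (\<Sum>X\<in>Pow V. card Q)"
      using V by (intro sum_strict_mono) (auto simp: not_le)
    also have "\<dots> = 16 * (card Q * 2 ^ t)" using V t by (simp add: card_Pow power_add)
    also have "\<dots> = (\<Sum>X\<in>Pow V. 16 * card {q \<in> Q. separates X q})"
      unfolding sum_distrib_left[symmetric] sum ..
    finally show False by simp
  qed
qed auto


section \<open>Colourings with few repeated colours\<close>

lemma good_colouring_few_repeats:
  assumes good: "good_colouring n k ((k choose 2) - k div 2 + 1) col" and kn: "k \<le> n"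
    and T: "T \<subseteq> {..<n}" "card T \<le> k" and F: "F \<subseteq> edges_of T"
  shows "card F < card (col ` F) + k div 2"
proof -
  have fT: "finite T" using T finite_subset by blast
  have "k - card T \<le> card ({..<n} - T)" using T kn by (simp add: card_Diff_subset fT)
  then obtain U where U: "U \<subseteq> {..<n} - T" "card U = k - card T" "finite U"
    by (rule obtain_subset_with_card_n)
  define S where "S = T \<union> U"
  have "card S = card T + card U"
    unfolding S_def using U fT by (intro card_Un_disjoint) auto
  then have S: "S \<subseteq> {..<n}" "card S = k" "finite S"
    unfolding S_def using U T fT by auto
  have FS: "F \<subseteq> edges_of S" using F edges_of_mono[of T S] unfolding S_def by auto
  have fE: "finite (edges_of S)" by (rule finite_edges_of[OF S(3)])
  have fF: "finite F" using FS fE finite_subset by blast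
  have "(k choose 2) - k div 2 + 1 \<le> card (col ` edges_of S)"
    using good S unfolding good_colouring_def by blast
  also have "col ` edges_of S = col ` F \<union> col ` (edges_of S - F)" using FS by blast
  also have "card \<dots> \<le> card (col ` F) + card (col ` (edges_of S - F))" by (rule card_Un_le)
  also have "card (col ` (edges_of S - F)) \<le> card (edges_of S - F)"
    using fE by (intro card_image_le) auto
  also have "card (edges_of S - F) = (k choose 2) - card F"
    using card_Diff_subset[OF fF FS] card_edges_of[OF S(3)] S(2) by simp
  finally have "(k choose 2) - k div 2 + 1 \<le> card (col ` F) + ((k choose 2) - card F)" by simp
  moreover have "card F \<le> k choose 2" using card_mono[OF fE FS] card_edges_of[OF S(3)] S(2) by simp
  ultimately show ?thesis by linarith
qed

locale rich_colouring =
  fixes n k :: nat and col :: "nat set \<Rightarrow> nat"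
  assumes k4: "4 \<le> k" "4 dvd k" and kn: "k \<le> n"
    and good: "good_colouring n k ((k choose 2) - k div 2 + 1) col"
begin

lemma few_repeats: "T \<subseteq> {..<n} \<Longrightarrow> card T \<le> k \<Longrightarrow> F \<subseteq> edges_of T \<Longrightarrow> card F < card (col ` F) + k div 2"
  using good_colouring_few_repeats[OF good kn] by blast

definition colour_nbhd :: "nat \<Rightarrow> nat \<Rightarrow> nat set" where
  "colour_nbhd v c = {w. w < n \<and> w \<noteq> v \<and> col {v, w} = c}"

definition heavy :: "nat set" where
  "heavy = {v. v < n \<and> (\<exists>c. k \<le> card (colour_nbhd v c))}"

definition light :: "nat set" where
  "light = {..<n} - heavy"

lemma finite_colour_nbhd: "finite (colour_nbhd v c)"
  unfolding colour_nbhd_def by (rule finite_subset[of _ "{..<n}"]) auto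

lemma add_monochromatic_star:
  assumes v: "v \<in> heavy" "v \<notin> T" and T: "T \<subseteq> {..<n}" "card T + 4 \<le> k" and F: "F \<subseteq> edges_of T"
  obtains T' F' where "T' \<subseteq> {..<n}" "card T' \<le> card T + 4" "F' \<subseteq> edges_of T'"
    "card F' = card F + 3" "card (col ` F') \<le> card (col ` F) + 1"
proof -
  have fT: "finite T" using T finite_subset by blast
  have fF: "finite F" using F finite_edges_of[OF fT] finite_subset by blast
  obtain c where c: "k \<le> card (colour_nbhd v c)" "v < n" using v unfolding heavy_def by blast
  have "card (colour_nbhd v c) - card T \<le> card (colour_nbhd v c - T)"
    by (rule diff_card_le_card_Diff[OF fT])
  then have "3 \<le> card (colour_nbhd v c - T)" using c T by linarith
  then obtain Z where Z: "Z \<subseteq> colour_nbhd v c - T" "card Z = 3" "finite Z"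
    by (rule obtain_subset_with_card_n)
  define star where "star = (\<lambda>w. {v, w}) ` Z"
  have Zn: "Z \<subseteq> {..<n}" "v \<notin> Z" using Z unfolding colour_nbhd_def by auto
  have "card star = 3"
    unfolding star_def using Z Zn by (subst card_image) (auto simp: inj_on_def doubleton_eq_iff)
  moreover have "F \<inter> star = {}" using F v Zn unfolding star_def edges_of_def by auto
  ultimately have card_F': "card (F \<union> star) = card F + 3"
    using fF Z by (simp add: card_Un_disjoint star_def)
  have "col ` star \<subseteq> {c}" using Z unfolding star_def colour_nbhd_def by auto
  then have "card (col ` star) \<le> 1" using card_mono[of "{c}"] by fastforce
  then have colours_F': "card (col ` (F \<union> star)) \<le> card (col ` F) + 1"
    using card_Un_le[of "col ` F" "col ` star"] by (simp add: image_Un)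
  have card_T': "card (T \<union> insert v Z) \<le> card T + 4"
    using card_Un_le[of T "insert v Z"] Z Zn by simp
  have "F \<union> star \<subseteq> edges_of (T \<union> insert v Z)"
    using F edges_of_mono[of T "T \<union> insert v Z"] Zn unfolding star_def
    by (auto intro!: doubleton_in_edges_of)
  moreover have "T \<union> insert v Z \<subseteq> {..<n}" using T Zn c by auto
  ultimately show ?thesis using that card_F' colours_F' card_T' by blast
qed

lemma card_heavy_less: "card heavy < k"
proof (rule ccontr)
  assume "\<not> card heavy < k"
  then have many: "k \<le> card heavy" by simp
  have "\<exists>T F. T \<subseteq> {..<n} \<and> card T \<le> 4 * j \<and> F \<subseteq> edges_of T \<and> card (col ` F) + 2 * j \<le> card F"
    if "j \<le> k div 4" for j
    using that
  proof (induction j)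
    case 0
    show ?case by (intro exI[of _ "{}"]) auto
  next
    case (Suc j)
    then obtain T F where TF: "T \<subseteq> {..<n}" "card T \<le> 4 * j" "F \<subseteq> edges_of T"
        "card (col ` F) + 2 * j \<le> card F" by auto
    have fT: "finite T" using TF finite_subset by blast
    have room: "card T + 4 \<le> k" using TF Suc.prems k4 by (auto elim!: dvdE)
    have "heavy - T \<noteq> {}" using card_mono[OF fT, of heavy] many room by auto
    then obtain v where "v \<in> heavy" "v \<notin> T" by blast
    with add_monochromatic_star[OF _ _ TF(1) room TF(3)] obtain T' F' where
      "T' \<subseteq> {..<n}" "card T' \<le> card T + 4" "F' \<subseteq> edges_of T'"
      "card F' = card F + 3" "card (col ` F') \<le> card (col ` F) + 1" by blast
    with TF show ?case by (intro exI[of _ T'] exI[of _ F']) auto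
  qed
  then obtain T F where "T \<subseteq> {..<n}" "card T \<le> 4 * (k div 4)" "F \<subseteq> edges_of T"
      "card (col ` F) + 2 * (k div 4) \<le> card F" by blast
  moreover have "4 * (k div 4) = k" "2 * (k div 4) = k div 2" using k4 by (auto elim!: dvdE)
  ultimately show False using few_repeats[of T F] by auto
qed

lemma light_subset: "light \<subseteq> {..<n}"
  unfolding light_def by auto

lemma finite_light: "finite light"
  using light_subset finite_subset by blast

lemma card_light: "n - k \<le> card light"
proof -
  have "card light = n - card heavy" unfolding light_def
    by (subst card_Diff_subset) (auto simp: heavy_def finite_subset[of _ "{..<n}"])
  with card_heavy_less show ?thesis by simp
qed

lemma card_colour_nbhd_light: "v \<in> light \<Longrightarrow> card (colour_nbhd v c) < k"
  unfolding light_def heavy_def by (auto simp: not_le)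

end


section \<open>The product graph\<close>

context rich_colouring
begin

text \<open>The product graph: a path in it projects to two paths, in the two coordinates, that
  use the same sequence of colours.\<close>

definition linked :: "nat \<times> nat \<Rightarrow> nat \<times> nat \<Rightarrow> bool" where
  "linked p q \<longleftrightarrow> fst p \<noteq> fst q \<and> snd p \<noteq> snd q \<and> col {fst p, fst q} = col {snd p, snd q}"

lemma linked_sym: "linked p q \<Longrightarrow> linked q p"
  unfolding linked_def by (auto simp: insert_commute)

lemma not_linked_refl: "\<not> linked p p"
  unfolding linked_def by auto

lemma card_linked_fst_eq_less:
  assumes W: "W \<subseteq> light \<times> light" and p: "snd p \<in> light"
  shows "card {q\<in>W. linked p q \<and> fst q = x} < k"
proof -
  have "{q\<in>W. linked p q \<and> fst q = x} \<subseteq> Pair x ` colour_nbhd (snd p) (col {fst p, x})"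
  proof
    fix q assume q: "q \<in> {q\<in>W. linked p q \<and> fst q = x}"
    moreover have "snd q < n" using q W light_subset by (cases q) auto
    ultimately have "snd q \<in> colour_nbhd (snd p) (col {fst p, x})"
      unfolding linked_def colour_nbhd_def by auto
    with q show "q \<in> Pair x ` colour_nbhd (snd p) (col {fst p, x})" by (cases q) auto
  qed
  then have "card {q\<in>W. linked p q \<and> fst q = x} \<le> card (Pair x ` colour_nbhd (snd p) (col {fst p, x}))"
    by (intro card_mono finite_imageI finite_colour_nbhd)
  also have "\<dots> \<le> card (colour_nbhd (snd p) (col {fst p, x}))" by (rule card_image_le[OF finite_colour_nbhd])
  also have "\<dots> < k" by (rule card_colour_nbhd_light[OF p])
  finally show ?thesis .
qed

lemma card_linked_snd_eq_less:
  assumes W: "W \<subseteq> light \<times> light" and p: "fst p \<in> light"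
  shows "card {q\<in>W. linked p q \<and> snd q = y} < k"
proof -
  have "{q\<in>W. linked p q \<and> snd q = y} \<subseteq> (\<lambda>a. (a, y)) ` colour_nbhd (fst p) (col {snd p, y})"
  proof
    fix q assume q: "q \<in> {q\<in>W. linked p q \<and> snd q = y}"
    moreover have "fst q < n" using q W light_subset by (cases q) auto
    ultimately have "fst q \<in> colour_nbhd (fst p) (col {snd p, y})"
      unfolding linked_def colour_nbhd_def by auto
    with q show "q \<in> (\<lambda>a. (a, y)) ` colour_nbhd (fst p) (col {snd p, y})" by (cases q) auto
  qed
  then have "card {q\<in>W. linked p q \<and> snd q = y} \<le> card ((\<lambda>a. (a, y)) ` colour_nbhd (fst p) (col {snd p, y}))"
    by (intro card_mono finite_imageI finite_colour_nbhd)
  also have "\<dots> \<le> card (colour_nbhd (fst p) (col {snd p, y}))" by (rule card_image_le[OF finite_colour_nbhd])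
  also have "\<dots> < k" by (rule card_colour_nbhd_light[OF p])
  finally show ?thesis .
qed

end

locale min_degree_product = rich_colouring +
  fixes W :: "(nat \<times> nat) set" and r :: "nat \<times> nat" and m :: nat
  assumes W_light: "W \<subseteq> light \<times> light" and fst_snd_disjoint: "fst ` W \<inter> snd ` W = {}"
    and r: "r \<in> W" and min_degree: "\<And>p. p \<in> W \<Longrightarrow> m + k * k < card {q\<in>W. linked p q}"
begin

lemma finite_W: "finite W"
  using W_light finite_light finite_subset by blast

lemma card_linked_avoiding:
  assumes p: "p \<in> W" and U: "finite U" "finite U'" "card U + card U' \<le> k"
  shows "m < card {q\<in>W. linked p q \<and> fst q \<notin> U \<and> snd q \<notin> U'}"
proof -
  let ?A = "{q\<in>W. linked p q \<and> fst q \<notin> U \<and> snd q \<notin> U'}"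
  let ?B = "\<Union>x\<in>U. {q\<in>W. linked p q \<and> fst q = x}"
  let ?C = "\<Union>y\<in>U'. {q\<in>W. linked p q \<and> snd q = y}"
  have light: "fst p \<in> light" "snd p \<in> light" using p W_light by auto
  have "finite (?A \<union> ?B \<union> ?C)" by (rule finite_subset[OF _ finite_W]) auto
  then have "card {q\<in>W. linked p q} \<le> card (?A \<union> ?B \<union> ?C)" by (rule card_mono) auto
  also have "\<dots> \<le> card ?A + card ?B + card ?C" by (meson card_Un_le add_le_mono1 order_trans)
  also have "card ?B \<le> (\<Sum>x\<in>U. card {q\<in>W. linked p q \<and> fst q = x})" by (rule card_UN_le[OF U(1)])
  also have "\<dots> \<le> (\<Sum>x\<in>U. k)"
    by (intro sum_mono less_imp_le card_linked_fst_eq_less W_light light)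
  also have "card ?C \<le> (\<Sum>y\<in>U'. card {q\<in>W. linked p q \<and> snd q = y})" by (rule card_UN_le[OF U(2)])
  also have "\<dots> \<le> (\<Sum>y\<in>U'. k)"
    by (intro sum_mono less_imp_le card_linked_snd_eq_less W_light light)
  finally have "card {q\<in>W. linked p q} \<le> card ?A + k * (card U + card U')"
    by (simp add: algebra_simps)
  also have "k * (card U + card U') \<le> k * k" using U by simp
  finally show ?thesis using min_degree[OF p] by linarith
qed

text \<open>Paths are listed towards \<open>r\<close>, so they grow at their head.\<close>

definition paths :: "nat \<Rightarrow> (nat \<times> nat) list set" where
  "paths j = {P. length P = Suc j \<and> last P = r \<and> set P \<subseteq> W \<and> successively linked P
     \<and> distinct (map fst P) \<and> distinct (map snd P)}"

lemma finite_paths: "finite (paths j)"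
  by (rule finite_subset[OF _ finite_lists_length_eq[OF finite_W, of "Suc j"]]) (auto simp: paths_def)

lemma card_paths: "2 * j \<le> k \<Longrightarrow> m ^ j \<le> card (paths j)"
proof (induction j)
  case 0
  have "{[r]} \<subseteq> paths 0" using r by (auto simp: paths_def)
  then have "card {[r]} \<le> card (paths 0)" by (rule card_mono[OF finite_paths])
  then show ?case by simp
next
  case (Suc j)
  define extensions where
    "extensions P = {q\<in>W. linked (hd P) q \<and> fst q \<notin> fst ` set P \<and> snd q \<notin> snd ` set P}" for P
  have card_extensions: "m \<le> card (extensions P)" if P: "P \<in> paths j" for P
  proof -
    have "P \<noteq> []" "distinct (map fst P)" "distinct (map snd P)" "length P = Suc j" "set P \<subseteq> W"
      using P by (auto simp: paths_def)
    then have "hd P \<in> W" "card (fst ` set P) + card (snd ` set P) = 2 * Suc j"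
      using distinct_card[of "map fst P"] distinct_card[of "map snd P"] by auto
    then show ?thesis
      unfolding extensions_def
      using card_linked_avoiding[of "hd P" "fst ` set P" "snd ` set P"] Suc.prems by simp
  qed
  have "(\<lambda>(P, q). q # P) ` Sigma (paths j) extensions \<subseteq> paths (Suc j)"
  proof clarify
    fix P q assume "P \<in> paths j" and "q \<in> extensions P"
    then have P: "P \<noteq> []" "length P = Suc j" "last P = r" "set P \<subseteq> W" "successively linked P"
        "distinct (map fst P)" "distinct (map snd P)"
      and q: "q \<in> W" "linked (hd P) q" "fst q \<notin> fst ` set P" "snd q \<notin> snd ` set P"
      by (auto simp: paths_def extensions_def)
    have "successively linked (q # P)"
      using P(5) linked_sym[OF q(2)] by (simp add: successively_Cons)
    with P q show "q # P \<in> paths (Suc j)" by (simp add: paths_def)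
  qed
  have "m ^ Suc j \<le> m * card (paths j)" using Suc by simp
  also have "\<dots> = (\<Sum>P\<in>paths j. m)" by simp
  also have "\<dots> \<le> (\<Sum>P\<in>paths j. card (extensions P))" by (rule sum_mono) (rule card_extensions)
  also have "\<dots> = card (Sigma (paths j) extensions)"
    using finite_paths finite_W by (simp add: extensions_def)
  also have "\<dots> = card ((\<lambda>(P, q). q # P) ` Sigma (paths j) extensions)"
    by (rule card_image[symmetric]) (auto simp: inj_on_def)
  also have "\<dots> \<le> card (paths (Suc j))"
    by (rule card_mono[OF finite_paths \<open>_ \<subseteq> paths (Suc j)\<close>])
  finally show ?case .
qed

lemma colours_path_edges_map_fst_snd:
  assumes "P \<in> paths j"
  shows "col ` path_edges (map fst P) = col ` path_edges (map snd P)"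
proof -
  have "successively linked P" using assms by (simp add: paths_def)
  then show ?thesis
    unfolding path_edges_map image_image successively_conv_nth linked_def
    by (intro image_cong) auto
qed


lemma map_paths_same_ends:
  assumes "P \<in> paths j" "Q \<in> paths j" "hd P = hd Q"
  shows "map h P ! 0 = map h Q ! 0" "last (map h P) = last (map h Q)"
proof -
  have "P \<noteq> []" "Q \<noteq> []" "last P = r" "last Q = r" using assms by (auto simp: paths_def)
  with assms(3) show "map h P ! 0 = map h Q ! 0" "last (map h P) = last (map h Q)"
    by (simp_all add: hd_conv_nth[symmetric] hd_map last_map)
qed

lemma card_vertices_le_twice_max_edges:
  assumes P: "P \<in> paths j" and Q: "Q \<in> paths j" and "P \<noteq> Q" "hd P = hd Q"
  shows "card (set (map fst P) \<union> set (map fst Q)) + card (set (map snd P) \<union> set (map snd Q))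
    \<le> 2 * max (card (path_edges (map fst P) \<union> path_edges (map fst Q)))
              (card (path_edges (map snd P) \<union> path_edges (map snd Q)))"
proof -
  have PQ: "length P = Suc j" "length Q = Suc j" "last P = r" "last Q = r"
    "distinct (map fst P)" "distinct (map snd P)" "distinct (map fst Q)" "distinct (map snd Q)"
    using P Q by (auto simp: paths_def)
  note ends = map_paths_same_ends[OF P Q \<open>hd P = hd Q\<close>]
  have cycle: "card (set (map h P) \<union> set (map h Q)) \<le> card (path_edges (map h P) \<union> path_edges (map h Q))"
    if "map h P \<noteq> map h Q" "distinct (map h P)" "distinct (map h Q)" for h :: "nat \<times> nat \<Rightarrow> nat"
    using PQ by (intro card_Un_set_le_card_Un_path_edges[OF that(2,3) _ that(1) ends]) simp
  have path: "card (set (map h P)) = Suc j" "card (set (map h Q)) = Suc j"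
    if "distinct (map h P)" "distinct (map h Q)" for h :: "nat \<times> nat \<Rightarrow> nat"
    using distinct_card[OF that(1)] distinct_card[OF that(2)] PQ by simp_all
  have lower: "Suc j \<le> card (set (map h P) \<union> set (map h Q))"
    if "distinct (map h P)" "distinct (map h Q)" for h :: "nat \<times> nat \<Rightarrow> nat"
    using path[OF that] card_mono[of "set (map h P) \<union> set (map h Q)" "set (map h P)"] by simp
  have "map fst P \<noteq> map fst Q \<or> map snd P \<noteq> map snd Q"
    using \<open>P \<noteq> Q\<close> by (metis zip_map_fst_snd)
  then show ?thesis
    using cycle[of fst] cycle[of snd] lower[of fst] lower[of snd] path[of fst] path[of snd] PQ
    by (cases "map fst P = map fst Q"; cases "map snd P = map snd Q") auto
qed

definition twin_graphs :: "nat set \<Rightarrow> nat set \<Rightarrow> nat set set \<Rightarrow> nat set set \<Rightarrow> bool" where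
  "twin_graphs A B EA EB \<longleftrightarrow> finite A \<and> finite B \<and> A \<subseteq> fst ` W \<and> B \<subseteq> snd ` W
     \<and> fst r \<in> A \<and> snd r \<in> B \<and> EA \<subseteq> edges_of A \<and> EB \<subseteq> edges_of B \<and> col ` EA = col ` EB
     \<and> card A + card B \<le> 2 * max (card EA) (card EB)"

lemma twin_graphs_of_paths:
  assumes P: "P \<in> paths (k div 4)" and Q: "Q \<in> paths (k div 4)" and "P \<noteq> Q" "hd P = hd Q"
  shows "twin_graphs (set (map fst P) \<union> set (map fst Q)) (set (map snd P) \<union> set (map snd Q))
      (path_edges (map fst P) \<union> path_edges (map fst Q)) (path_edges (map snd P) \<union> path_edges (map snd Q))"
proof -
  have PQ: "P \<noteq> []" "Q \<noteq> []" "last P = r" "set P \<subseteq> W" "set Q \<subseteq> W"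
    "distinct (map fst P)" "distinct (map snd P)" "distinct (map fst Q)" "distinct (map snd Q)"
    using P Q by (auto simp: paths_def)
  have "r \<in> set P" using PQ(1,3) last_in_set by blast
  moreover have "path_edges (map h P) \<union> path_edges (map h Q) \<subseteq> edges_of (set (map h P) \<union> set (map h Q))"
    if "distinct (map h P)" "distinct (map h Q)" for h :: "nat \<times> nat \<Rightarrow> nat"
    using path_edges_subset_edges_of[OF that(1)] path_edges_subset_edges_of[OF that(2)]
      edges_of_mono[of "set (map h P)"] edges_of_mono[of "set (map h Q)"] by blast
  moreover have "col ` (path_edges (map fst P) \<union> path_edges (map fst Q))
      = col ` (path_edges (map snd P) \<union> path_edges (map snd Q))"
    using colours_path_edges_map_fst_snd[OF P] colours_path_edges_map_fst_snd[OF Q] by (simp add: image_Un)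
  ultimately show ?thesis
    unfolding twin_graphs_def using PQ card_vertices_le_twice_max_edges[OF assms] by auto
qed

lemma card_twin_graphs_of_paths_le:
  assumes P: "P \<in> paths (k div 4)" and Q: "Q \<in> paths (k div 4)" and "hd P = hd Q"
  shows "card (set (map fst P) \<union> set (map fst Q)) + card (set (map snd P) \<union> set (map snd Q)) \<le> k"
proof -
  have "1 \<le> k div 4" "4 * (k div 4) = k" using k4 by auto
  moreover have "card (set (map fst P) \<union> set (map fst Q)) \<le> 2 * (k div 4)"
    using P Q \<open>1 \<le> k div 4\<close>
    by (intro card_Un_set_paths_le map_paths_same_ends[OF P Q \<open>hd P = hd Q\<close>]) (auto simp: paths_def)
  moreover have "card (set (map snd P) \<union> set (map snd Q)) \<le> 2 * (k div 4)"
    using P Q \<open>1 \<le> k div 4\<close>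
    by (intro card_Un_set_paths_le map_paths_same_ends[OF P Q \<open>hd P = hd Q\<close>]) (auto simp: paths_def)
  ultimately show ?thesis by linarith
qed

lemma twin_graphs_extend:
  assumes tw: "twin_graphs A B EA EB" and room: "card A + card B + 2 \<le> k"
  obtains A' B' EA' EB' where "twin_graphs A' B' EA' EB'" "card A' + card B' = card A + card B + 2"
proof -
  have fin: "finite A" "finite B" and sub: "EA \<subseteq> edges_of A" "EB \<subseteq> edges_of B"
    and r_in: "fst r \<in> A" "snd r \<in> B" using tw by (auto simp: twin_graphs_def)
  have "m < card {q\<in>W. linked r q \<and> fst q \<notin> A \<and> snd q \<notin> B}"
    using room by (intro card_linked_avoiding[OF r fin]) auto
  then have "{q\<in>W. linked r q \<and> fst q \<notin> A \<and> snd q \<notin> B} \<noteq> {}" by (metis card.empty not_less0)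
  then obtain q where q: "q \<in> W" "linked r q" "fst q \<notin> A" "snd q \<notin> B" by blast
  define ea where "ea = {fst r, fst q}"
  define eb where "eb = {snd r, snd q}"
  have "ea \<notin> EA" "eb \<notin> EB"
    using sub q unfolding ea_def eb_def edges_of_def by auto
  moreover have "finite EA" "finite EB"
    using sub fin finite_edges_of finite_subset by blast+
  moreover have "col ea = col eb" using q unfolding linked_def ea_def eb_def by simp
  moreover have "insert ea EA \<subseteq> edges_of (insert (fst q) A)" "insert eb EB \<subseteq> edges_of (insert (snd q) B)"
    using sub edges_of_mono[of A "insert (fst q) A"] edges_of_mono[of B "insert (snd q) B"] r_in q
    unfolding ea_def eb_def linked_def by (auto intro!: doubleton_in_edges_of)
  ultimately have "twin_graphs (insert (fst q) A) (insert (snd q) B) (insert ea EA) (insert eb EB)"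
    using tw q fin unfolding twin_graphs_def by (auto simp: image_iff)
  moreover have "card (insert (fst q) A) + card (insert (snd q) B) = card A + card B + 2"
    using fin q by simp
  ultimately show ?thesis by (rule that)
qed

lemma twin_graphs_extend_by:
  assumes "twin_graphs A B EA EB" "card A + card B + 2 * t \<le> k"
  shows "\<exists>A' B' EA' EB'. twin_graphs A' B' EA' EB' \<and> card A' + card B' = card A + card B + 2 * t"
  using assms(2)
proof (induction t)
  case 0
  with assms(1) show ?case by auto
next
  case (Suc t)
  then obtain A' B' EA' EB' where tw: "twin_graphs A' B' EA' EB'"
    and card: "card A' + card B' = card A + card B + 2 * t" by auto
  have "card A' + card B' + 2 \<le> k" using Suc.prems card by simp
  with tw obtain A'' B'' EA'' EB'' where
    "twin_graphs A'' B'' EA'' EB''" "card A'' + card B'' = card A' + card B' + 2"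
    by (rule twin_graphs_extend)
  with card show ?case by auto
qed

text \<open>Here the repetition bound of the colouring enters: the edges of both graphs form
  \<open>card EA + card EB\<close> edges with at most \<open>min (card EA) (card EB)\<close> colours.\<close>

lemma twin_graphs_few_edges:
  assumes tw: "twin_graphs A B EA EB" and small: "card A + card B \<le> k"
  shows "2 * max (card EA) (card EB) < k"
proof -
  have fin: "finite A" "finite B" and AB: "A \<subseteq> fst ` W" "B \<subseteq> snd ` W"
    and sub: "EA \<subseteq> edges_of A" "EB \<subseteq> edges_of B" and colours: "col ` EA = col ` EB"
    using tw by (auto simp: twin_graphs_def)
  have disj: "A \<inter> B = {}" using AB fst_snd_disjoint by blast
  have fE: "finite EA" "finite EB" using sub fin finite_edges_of finite_subset by blast+
  have "EA \<inter> EB = {}" using sub edges_of_disjoint[OF disj] by blast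
  then have card_F: "card (EA \<union> EB) = card EA + card EB" using fE by (simp add: card_Un_disjoint)
  have "A \<union> B \<subseteq> {..<n}" using AB W_light light_subset by fastforce
  moreover have "card (A \<union> B) \<le> k" using small card_Un_le[of A B] by linarith
  moreover have "EA \<union> EB \<subseteq> edges_of (A \<union> B)" using sub edges_of_mono[of A "A \<union> B"] edges_of_mono[of B "A \<union> B"] by blast
  ultimately have "card (EA \<union> EB) < card (col ` (EA \<union> EB)) + k div 2" by (rule few_repeats)
  moreover have "col ` (EA \<union> EB) = col ` EA" using colours by (simp add: image_Un)
  ultimately have "card EA + card EB < card (col ` EA) + k div 2" using card_F by simp
  moreover have "card (col ` EA) \<le> card EA" "card (col ` EA) \<le> card EB"
    using card_image_le[OF fE(1), of col] card_image_le[OF fE(2), of col] colours by auto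
  moreover have "2 * (k div 2) = k" using k4 by auto
  ultimately show ?thesis unfolding max_def by (split if_split) linarith
qed

lemma card_twin_graphs_gt:
  assumes tw: "twin_graphs A B EA EB"
  shows "k < card A + card B"
proof (rule ccontr)
  assume "\<not> k < card A + card B"
  then have "card A + card B + 2 * ((k - (card A + card B)) div 2) \<le> k" by simp
  from twin_graphs_extend_by[OF tw this] obtain A' B' EA' EB' where tw': "twin_graphs A' B' EA' EB'"
      and card': "card A' + card B' = card A + card B + 2 * ((k - (card A + card B)) div 2)" by blast
  have "k \<le> card A' + card B' + 1" "card A' + card B' \<le> k" using card' \<open>\<not> k < _\<close> by auto
  moreover have "2 * max (card EA') (card EB') < k" using twin_graphs_few_edges[OF tw'] calculation(2) .
  moreover have "card A' + card B' \<le> 2 * max (card EA') (card EB')" using tw' by (simp add: twin_graphs_def)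
  moreover have "even k" using k4 by (auto elim!: dvdE)
  ultimately show False by presburger
qed

lemma inj_on_hd_paths: "inj_on hd (paths (k div 4))"
proof (rule inj_onI, rule ccontr)
  fix P Q assume P: "P \<in> paths (k div 4)" and Q: "Q \<in> paths (k div 4)" and "hd P = hd Q" "P \<noteq> Q"
  from card_twin_graphs_gt[OF twin_graphs_of_paths[OF P Q \<open>P \<noteq> Q\<close> \<open>hd P = hd Q\<close>]]
    card_twin_graphs_of_paths_le[OF P Q \<open>hd P = hd Q\<close>]
  show False by linarith
qed

theorem power_le_card: "m ^ (k div 4) \<le> card W"
proof -
  have "hd ` paths (k div 4) \<subseteq> W"
  proof
    fix p assume "p \<in> hd ` paths (k div 4)"
    then obtain P where "P \<in> paths (k div 4)" "p = hd P" by blast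
    then have "P \<noteq> []" "set P \<subseteq> W" "p = hd P" by (auto simp: paths_def)
    then show "p \<in> W" using hd_in_set by blast
  qed
  then have "card (paths (k div 4)) \<le> card W"
    using card_image[OF inj_on_hd_paths] card_mono[OF finite_W] by metis
  moreover have "2 * (k div 4) \<le> k" by simp
  ultimately show ?thesis using card_paths le_trans by blast
qed

end

section \<open>Counting monochromatic quadruples\<close>

context rich_colouring
begin

definition light_pairs :: "(nat \<times> nat) set" where
  "light_pairs = {(a, c). a \<in> light \<and> c \<in> light \<and> a \<noteq> c}"

definition pair_colour :: "nat \<times> nat \<Rightarrow> nat" where
  "pair_colour p = col {fst p, snd p}"

definition monochromatic_quadruples :: "(nat \<times> nat \<times> nat \<times> nat) set" where
  "monochromatic_quadruples = {(a, c, b, d). a \<in> light \<and> c \<in> light \<and> b \<in> light \<and> d \<in> light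
     \<and> distinct [a, c, b, d] \<and> col {a, c} = col {b, d}}"

lemma light_pairs_subset: "light_pairs \<subseteq> light \<times> light"
  unfolding light_pairs_def by auto

lemma finite_light_pairs: "finite light_pairs"
  using finite_subset[OF light_pairs_subset] finite_light by blast

lemma card_light_pairs: "card light_pairs = card light * (card light - 1)"
proof -
  have "light_pairs = Sigma light (\<lambda>a. light - {a})" unfolding light_pairs_def by auto
  then have "card light_pairs = (\<Sum>a\<in>light. card (light - {a}))" using finite_light by simp
  also have "\<dots> = (\<Sum>a\<in>light. card light - 1)" using finite_light by (intro sum.cong) auto
  finally show ?thesis by simp
qed

lemma card_light_times_light_le: "card (light \<times> light) \<le> n ^ 2"
proof -
  have "card light \<le> n" using card_mono[OF _ light_subset] by simp
  then show ?thesis by (simp add: card_cartesian_product power2_eq_square mult_le_mono)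
qed

lemma card_light_pairs_le: "card light_pairs \<le> n ^ 2"
  by (rule le_trans[OF card_mono[OF _ light_pairs_subset] card_light_times_light_le])
    (simp add: finite_light)

lemma pair_colours_subset: "pair_colour ` light_pairs \<subseteq> col ` edges_of {..<n}"
  using light_subset unfolding light_pairs_def pair_colour_def by (force intro: doubleton_in_edges_of)

text \<open>A pair of the colour of \<open>p\<close> that shares a vertex \<open>a\<close> with \<open>p\<close> has its other vertex in
  the colour neighbourhood of \<open>a\<close>.\<close>

definition pairs_through :: "nat \<times> nat \<Rightarrow> (nat \<times> nat) set" where
  "pairs_through p = (\<Union>a\<in>{fst p, snd p}.
     {a} \<times> colour_nbhd a (pair_colour p) \<union> colour_nbhd a (pair_colour p) \<times> {a})"

lemma finite_pairs_through: "finite (pairs_through p)"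
  unfolding pairs_through_def by (simp add: finite_colour_nbhd)

lemma card_pairs_through:
  assumes "p \<in> light_pairs"
  shows "card (pairs_through p) \<le> 4 * k"
proof -
  let ?N = "\<lambda>a. colour_nbhd a (pair_colour p)"
  have star: "card ({a} \<times> ?N a \<union> ?N a \<times> {a}) \<le> 2 * k" if "a \<in> {fst p, snd p}" for a
  proof -
    have "a \<in> light" using that assms unfolding light_pairs_def by auto
    have "card ({a} \<times> ?N a \<union> ?N a \<times> {a}) \<le> card ({a} \<times> ?N a) + card (?N a \<times> {a})"
      by (rule card_Un_le)
    also have "\<dots> = 2 * card (?N a)" by (simp add: card_cartesian_product)
    also have "\<dots> \<le> 2 * k" using less_imp_le[OF card_colour_nbhd_light[OF \<open>a \<in> light\<close>]] by simp
    finally show ?thesis .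
  qed
  have "card (pairs_through p) \<le> (\<Sum>a\<in>{fst p, snd p}. card ({a} \<times> ?N a \<union> ?N a \<times> {a}))"
    unfolding pairs_through_def by (rule card_UN_le) simp
  also have "\<dots> \<le> (\<Sum>a\<in>{fst p, snd p}. 2 * k)" by (rule sum_mono) (rule star)
  also have "\<dots> = card {fst p, snd p} * (2 * k)" by simp
  also have "\<dots> \<le> 2 * (2 * k)" by (rule mult_le_mono1) (simp add: card_insert_if)
  finally show ?thesis by simp
qed

lemma same_colour_pairs_sharing_vertex:
  assumes "(a, c) \<in> light_pairs" "(b, d) \<in> light_pairs" "col {a, c} = col {b, d}"
    and "\<not> distinct [a, c, b, d]"
  shows "(b, d) \<in> pairs_through (a, c)"
proof -
  have "a \<noteq> c" "b \<noteq> d" "b < n" "d < n"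
    using assms(1,2) light_subset unfolding light_pairs_def by auto
  with assms(3,4) show ?thesis
    unfolding pairs_through_def pair_colour_def colour_nbhd_def by (auto simp: insert_commute)
qed

lemma card_same_colour_pairs_le:
  "card {(p, q) \<in> light_pairs \<times> light_pairs. pair_colour p = pair_colour q}
     \<le> card monochromatic_quadruples + 4 * k * card light_pairs"
proof -
  let ?S = "{(p, q) \<in> light_pairs \<times> light_pairs. pair_colour p = pair_colour q}"
  let ?h = "\<lambda>(a :: nat, c :: nat, b :: nat, d :: nat). ((a, c), (b, d))"
  have fQ: "finite monochromatic_quadruples"
    by (rule finite_subset[of _ "light \<times> light \<times> light \<times> light"])
      (auto simp: monochromatic_quadruples_def finite_light)
  have "?S \<subseteq> ?h ` monochromatic_quadruples \<union> Sigma light_pairs pairs_through"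
  proof
    fix x assume "x \<in> ?S"
    moreover obtain a c b d where x: "x = ((a, c), (b, d))" by (metis prod.exhaust)
    ultimately have S: "(a, c) \<in> light_pairs" "(b, d) \<in> light_pairs" "col {a, c} = col {b, d}"
      by (auto simp: pair_colour_def)
    show "x \<in> ?h ` monochromatic_quadruples \<union> Sigma light_pairs pairs_through"
    proof (cases "distinct [a, c, b, d]")
      case True
      with S have "(a, c, b, d) \<in> monochromatic_quadruples"
        unfolding monochromatic_quadruples_def light_pairs_def by auto
      then show ?thesis unfolding x by force
    next
      case False
      with same_colour_pairs_sharing_vertex[OF S] S(1) show ?thesis unfolding x by blast
    qed
  qed
  then have "card ?S \<le> card (?h ` monochromatic_quadruples \<union> Sigma light_pairs pairs_through)"
    using fQ finite_light_pairs finite_pairs_through by (intro card_mono) auto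
  also have "\<dots> \<le> card (?h ` monochromatic_quadruples) + card (Sigma light_pairs pairs_through)"
    by (rule card_Un_le)
  also have "card (?h ` monochromatic_quadruples) \<le> card monochromatic_quadruples"
    by (rule card_image_le[OF fQ])
  also have "card (Sigma light_pairs pairs_through) = (\<Sum>p\<in>light_pairs. card (pairs_through p))"
    using finite_light_pairs finite_pairs_through by simp
  also have "\<dots> \<le> (\<Sum>p\<in>light_pairs. 4 * k)" by (rule sum_mono) (rule card_pairs_through)
  finally show ?thesis by (simp add: ac_simps)
qed

text \<open>The quadruple \<open>(a, c, b, d)\<close> is the edge between \<open>(a, b)\<close> and \<open>(c, d)\<close>.\<close>

lemma card_separated_quadruples:
  assumes X: "X \<subseteq> light"
  shows "card {q \<in> monochromatic_quadruples. separates X q}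
    = (\<Sum>p\<in>X \<times> (light - X). card {q\<in>X \<times> (light - X). linked p q})"
proof -
  let ?W = "X \<times> (light - X)"
  let ?E = "Sigma ?W (\<lambda>p. {q\<in>?W. linked p q})"
  let ?h = "\<lambda>((a :: nat, b :: nat), (c :: nat, d :: nat)). (a, c, b, d)"
  have edge_iff: "((a, b), (c, d)) \<in> ?E \<longleftrightarrow> (a, c, b, d) \<in> monochromatic_quadruples \<and> separates X (a, c, b, d)"
    for a b c d
    using X unfolding monochromatic_quadruples_def separates_def linked_def by auto
  have image: "?h ` ?E = {q \<in> monochromatic_quadruples. separates X q}"
  proof (intro equalityI subsetI)
    fix z assume "z \<in> ?h ` ?E"
    then obtain a b c d where "((a, b), (c, d)) \<in> ?E" "z = (a, c, b, d)" by auto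
    with edge_iff show "z \<in> {q \<in> monochromatic_quadruples. separates X q}" by simp
  next
    fix z assume z: "z \<in> {q \<in> monochromatic_quadruples. separates X q}"
    obtain a c b d where ze: "z = (a, c, b, d)" by (metis prod.exhaust)
    with z edge_iff have "((a, b), (c, d)) \<in> ?E" by simp
    then show "z \<in> ?h ` ?E" unfolding ze by (rule rev_image_eqI) simp
  qed
  have "inj_on ?h ?E" by (clarsimp simp: inj_on_def)
  then have "card (?h ` ?E) = card ?E" by (rule card_image)
  then have "card {q \<in> monochromatic_quadruples. separates X q} = card ?E" by (simp only: image)
  also have "card ?E = (\<Sum>p\<in>?W. card {q\<in>?W. linked p q})"
    using finite_subset[OF X finite_light] finite_light by (simp add: card_SigmaI)
  finally show ?thesis .
qed

lemma sum_degrees_product_le: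
  assumes m: "n ^ 2 < m ^ (k div 4)" and X: "X \<subseteq> light"
  shows "(\<Sum>p\<in>X \<times> (light - X). card {q\<in>X \<times> (light - X). linked p q})
    \<le> 2 * (m + k * k) * card (X \<times> (light - X))"
proof (rule ccontr)
  let ?W = "X \<times> (light - X)"
  assume "\<not> ?thesis"
  then have dense: "2 * (m + k * k) * card ?W < (\<Sum>p\<in>?W. card {q\<in>?W. linked p q})" by simp
  have fW: "finite ?W" using X finite_light finite_subset by blast
  have "\<exists>W'\<subseteq>?W. W' \<noteq> {} \<and> (\<forall>p\<in>W'. m + k * k < card {q\<in>W'. linked p q})"
    using fW linked_sym not_linked_refl dense by (rule exists_subgraph_min_degree)
  then obtain W' where
    W': "W' \<subseteq> ?W" "W' \<noteq> {}" "\<forall>p\<in>W'. m + k * k < card {q\<in>W'. linked p q}"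
    by blast
  then obtain r where "r \<in> W'" by blast
  moreover have "fst ` W' \<subseteq> X" "snd ` W' \<subseteq> light - X" using W'(1) by auto
  then have "fst ` W' \<inter> snd ` W' = {}" by blast
  moreover have "W' \<subseteq> light \<times> light" using W'(1) X by auto
  ultimately have "min_degree_product n k col W' r m"
    using W'(3) by (intro min_degree_product.intro rich_colouring_axioms min_degree_product_axioms.intro) auto
  then have "m ^ (k div 4) \<le> card W'" by (rule min_degree_product.power_le_card)
  also have "card W' \<le> card (light \<times> light)"
    using \<open>W' \<subseteq> light \<times> light\<close> finite_light by (intro card_mono) auto
  also have "\<dots> \<le> n ^ 2" by (rule card_light_times_light_le)
  finally show False using m by simp
qed

lemma card_monochromatic_quadruples_le:
  assumes m: "n ^ 2 < m ^ (k div 4)"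
  shows "card monochromatic_quadruples \<le> 32 * (m + k * k) * n ^ 2"
proof -
  have "\<And>a c b d. (a, c, b, d) \<in> monochromatic_quadruples
      \<Longrightarrow> a \<in> light \<and> c \<in> light \<and> b \<in> light \<and> d \<in> light \<and> distinct [a, c, b, d]"
    unfolding monochromatic_quadruples_def by simp
  from exists_subset_separating_many[OF finite_light this] obtain X where X: "X \<subseteq> light"
    and many: "card monochromatic_quadruples \<le> 16 * card {q \<in> monochromatic_quadruples. separates X q}"
    by blast
  have "card (X \<times> (light - X)) \<le> card (light \<times> light)"
    using X finite_light by (intro card_mono) auto
  also have "\<dots> \<le> n ^ 2" by (rule card_light_times_light_le)
  finally have W: "card (X \<times> (light - X)) \<le> n ^ 2" .
  note many
  also have "16 * card {q \<in> monochromatic_quadruples. separates X q}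
      \<le> 16 * (2 * (m + k * k) * card (X \<times> (light - X)))"
    unfolding card_separated_quadruples[OF X] using sum_degrees_product_le[OF m X] by simp
  also have "\<dots> \<le> 16 * (2 * (m + k * k) * n ^ 2)" using W by simp
  finally show ?thesis by (simp add: algebra_simps)
qed

lemma card_light_pairs_squared_le:
  assumes m: "n ^ 2 < m ^ (k div 4)"
  shows "card light_pairs ^ 2 \<le> (32 * (m + k * k) + 4 * k) * n ^ 2 * card (col ` edges_of {..<n})"
proof -
  let ?S = "{(p, q) \<in> light_pairs \<times> light_pairs. pair_colour p = pair_colour q}"
  have "card ?S \<le> card monochromatic_quadruples + 4 * k * card light_pairs"
    by (rule card_same_colour_pairs_le)
  also have "\<dots> \<le> 32 * (m + k * k) * n ^ 2 + 4 * k * n ^ 2"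
    using card_monochromatic_quadruples_le[OF m] card_light_pairs_le by (intro add_mono) simp_all
  finally have S: "card ?S \<le> (32 * (m + k * k) + 4 * k) * n ^ 2" by (simp add: algebra_simps)
  have "card (pair_colour ` light_pairs) \<le> card (col ` edges_of {..<n})"
    by (intro card_mono finite_imageI finite_edges_of pair_colours_subset) simp
  with S have "card ?S * card (pair_colour ` light_pairs)
      \<le> (32 * (m + k * k) + 4 * k) * n ^ 2 * card (col ` edges_of {..<n})"
    by (rule mult_le_mono)
  with card_squared_le_card_same_image[OF finite_light_pairs, of pair_colour] show ?thesis
    by linarith
qed

end

section \<open>The lower bound\<close>

lemma good_colouring_exists:
  assumes "2 \<le> k"
  shows "\<exists>col. good_colouring n k ((k choose 2) - k div 2 + 1) col"
proof -
  have "(k choose 2) - k div 2 + 1 \<le> card (set_encode ` edges_of S)"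
    if "S \<subseteq> {..<n}" "card S = k" for S
  proof -
    have fS: "finite S" using that assms card_ge_0_finite by force
    have "inj_on set_encode (edges_of S)"
      by (rule inj_on_subset[OF inj_on_set_encode]) (auto dest: finite_if_in_edges_of)
    then have "card (set_encode ` edges_of S) = k choose 2"
      using card_edges_of[OF fS] that by (simp add: card_image)
    moreover have "1 \<le> k choose 2" "1 \<le> k div 2" using assms by (simp_all add: Suc_leI zero_less_binomial)
    ultimately show ?thesis by linarith
  qed
  then show ?thesis unfolding good_colouring_def by blast
qed

lemma f_attained:
  assumes "2 \<le> k"
  obtains col where "good_colouring n k ((k choose 2) - k div 2 + 1) col"
    "card (col ` edges_of {..<n}) = f n k ((k choose 2) - k div 2 + 1)"
  using LeastI_ex[of "\<lambda>c. \<exists>col. good_colouring n k ((k choose 2) - k div 2 + 1) col \<and> card (col ` edges_of {..<n}) = c"]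
    good_colouring_exists[OF assms] unfolding f_def by blast

lemma f_lower_bound_nat:
  assumes k: "4 \<le> k" "4 dvd k" and kn: "k \<le> n" and m: "n ^ 2 < m ^ (k div 4)"
  shows "((n - k) * (n - k - 1)) ^ 2 \<le> (32 * (m + k * k) + 4 * k) * n ^ 2 * f n k ((k choose 2) - k div 2 + 1)"
proof -
  obtain col where col: "good_colouring n k ((k choose 2) - k div 2 + 1) col"
      "card (col ` edges_of {..<n}) = f n k ((k choose 2) - k div 2 + 1)"
    using f_attained[of k n] k by auto
  interpret rich_colouring n k col by unfold_locales (use k kn col in auto)
  have "(n - k) * (n - k - 1) \<le> card light_pairs"
    unfolding card_light_pairs using card_light by (intro mult_le_mono diff_le_mono) auto
  then have "((n - k) * (n - k - 1)) ^ 2 \<le> card light_pairs ^ 2" by (rule power_mono) simp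
  also have "\<dots> \<le> (32 * (m + k * k) + 4 * k) * n ^ 2 * card (col ` edges_of {..<n})"
    by (rule card_light_pairs_squared_le[OF m])
  finally show ?thesis using col(2) by simp
qed

lemma square_less_power_ceiling_root:
  assumes "0 < n" "0 < k" "4 dvd k"
  shows "n ^ 2 < (nat \<lfloor>real n powr (8 / real k)\<rfloor> + 1) ^ (k div 4)"
proof -
  define x where "x = real n powr (8 / real k)"
  have "0 \<le> x" unfolding x_def by simp
  have "x ^ (k div 4) = real n powr (real (k div 4) * (8 / real k))"
    unfolding x_def using assms by (simp add: powr_power)
  also have "real (k div 4) * (8 / real k) = 2" using assms by (auto simp: field_simps elim!: dvdE)
  finally have "x ^ (k div 4) = real n ^ 2" using assms by (simp add: powr_numeral)
  moreover have "x ^ (k div 4) < real (nat \<lfloor>x\<rfloor> + 1) ^ (k div 4)"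
    using \<open>0 \<le> x\<close> assms by (intro power_strict_mono) (linarith, auto elim!: dvdE)
  ultimately have "real (n ^ 2) < real ((nat \<lfloor>x\<rfloor> + 1) ^ (k div 4))" unfolding of_nat_power by simp
  then show ?thesis unfolding x_def by (simp only: of_nat_less_iff)
qed

lemma square_div_four_le_diff_mult:
  assumes "2 * k + 2 \<le> n"
  shows "(real n ^ 2 / 4) ^ 2 \<le> real (((n - k) * (n - k - 1)) ^ 2)"
proof -
  have "real n / 2 \<le> real (n - k)" "real n / 2 \<le> real (n - k - 1)"
    using assms by (simp_all add: of_nat_diff)
  then have "real n / 2 * (real n / 2) \<le> real (n - k) * real (n - k - 1)" by (intro mult_mono) auto
  then have "real n ^ 2 / 4 \<le> real (n - k) * real (n - k - 1)" by (simp add: power2_eq_square)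
  then have "(real n ^ 2 / 4) ^ 2 \<le> (real (n - k) * real (n - k - 1)) ^ 2"
    by (rule power_mono) simp
  also have "\<dots> = real (((n - k) * (n - k - 1)) ^ 2)" by (simp only: of_nat_mult of_nat_power)
  finally show ?thesis .
qed

text \<open>The bound is applied with \<open>m\<close> the least integer above \<open>x = n powr (8 / k)\<close>, so that
  \<open>m \<le> 2 x\<close>.\<close>

lemma f_lower_bound:
  assumes k: "4 \<le> k" "4 dvd k" and n: "4 * k \<le> n"
  shows "real n powr (2 - 8 / real k)
    \<le> 16 * (64 + 32 * real k ^ 2 + 4 * real k) * real (f n k ((k choose 2) - k div 2 + 1))"
proof -
  define F where "F = real (f n k ((k choose 2) - k div 2 + 1))"
  define K where "K = 64 + 32 * real k ^ 2 + 4 * real k"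
  define N where "N = real n ^ 2"
  define x where "x = real n powr (8 / real k)"
  define m where "m = nat \<lfloor>x\<rfloor> + 1"
  have npos: "0 < real n" using n k by simp
  then have Npos: "0 < N" unfolding N_def by simp
  have x1: "1 \<le> x" unfolding x_def using npos n by (intro ge_one_powr_ge_zero) auto
  have xm: "real m \<le> x + 1" unfolding m_def using x1 by linarith
  have "n ^ 2 < m ^ (k div 4)"
    unfolding m_def x_def using npos k by (intro square_less_power_ceiling_root) auto
  then have "((n - k) * (n - k - 1)) ^ 2 \<le> (32 * (m + k * k) + 4 * k) * n ^ 2 * f n k ((k choose 2) - k div 2 + 1)"
    using k n by (intro f_lower_bound_nat) simp_all
  then have "real (((n - k) * (n - k - 1)) ^ 2)
      \<le> real ((32 * (m + k * k) + 4 * k) * n ^ 2 * f n k ((k choose 2) - k div 2 + 1))"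
    by (simp only: of_nat_le_iff)
  also have "\<dots> = (32 * (real m + real k ^ 2) + 4 * real k) * N * F"
    unfolding F_def N_def by (simp add: power2_eq_square)
  also have "\<dots> \<le> K * x * N * F"
  proof -
    have "32 * (real m + real k ^ 2) + 4 * real k \<le> K * x"
      using xm x1 mult_left_mono[OF x1, of "32 + 32 * real k ^ 2 + 4 * real k"] unfolding K_def
      by (simp add: algebra_simps)
    then show ?thesis using Npos unfolding F_def by (intro mult_right_mono) simp_all
  qed
  finally have upper: "real (((n - k) * (n - k - 1)) ^ 2) \<le> K * x * N * F" .
  have "(N / 4) ^ 2 \<le> K * x * N * F"
    using square_div_four_le_diff_mult[of k n] n k upper unfolding N_def by linarith
  then have "N * N \<le> (16 * K * F * x) * N" by (simp add: power2_eq_square algebra_simps)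
  then have "N \<le> 16 * K * F * x" using Npos by simp
  moreover have "real n powr (2 - 8 / real k) = N / x"
    unfolding x_def N_def using npos by (simp add: powr_diff powr_numeral)
  ultimately show ?thesis using x1 unfolding F_def K_def by (simp add: divide_le_eq)
qed

theorem theorem1p2:
  fixes k :: nat
  assumes "k \<ge> 8" and "4 dvd k"
  shows "(\<lambda>n. real (f n k ((k choose 2) - k div 2 + 1)))
           \<in> \<Omega>(\<lambda>n. real n powr (2 - 8 / real k))"
proof (rule landau_omega.bigI)
  let ?K = "64 + 32 * real k ^ 2 + 4 * real k"
  have K: "0 < 16 * ?K" by (simp add: add_pos_nonneg)
  then show "0 < 1 / (16 * ?K)" by simp
  show "\<forall>\<^sub>F n in at_top. 1 / (16 * ?K) * norm (real n powr (2 - 8 / real k))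
      \<le> norm (real (f n k ((k choose 2) - k div 2 + 1)))"
    using eventually_ge_at_top[of "4 * k"]
  proof eventually_elim
    case (elim n)
    with f_lower_bound[of k n] assms
    have "real n powr (2 - 8 / real k) \<le> real (f n k ((k choose 2) - k div 2 + 1)) * (16 * ?K)"
      by (simp add: mult.commute)
    with K show ?case by (simp add: pos_divide_le_eq)
  qed
qed

end
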